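(* Consider the execution of the State Machine Replication protocol (described in the context) between two successive pulses $Pulse_i$ and $Pulse_{i+1}$, in the presence of fewer than $\lfloor n/3 \rfloor$ Byzantine processes and fewer than $\lceil n/6 \rceil - 1$ processes whose state is corrupted by a recurrent transient fault. Then all non-Byzantine processes reach the same state just before $Pulse_{i+1}$.
   Context: System model: $n$ processes in a synchronous, fully connected message-passing system with authenticated channels; Byzantine processes may deviate arbitrarily (including sending different messages to different processes). $M$ is a deterministic state machine with state set $Q$, input alphabet $\Sigma$ and transition function $\delta: Q\times\Sigma\to Q$ (states and inputs are encoded as elements of a totally ordered set, e.g. integers). Each process keeps a local variable input\_value (its current external input) and current\_state (its replica of the state of $M$). Execution is divided into iterations, each triggered by an external global pulse $Pulse$ and consisting of several synchronous rounds. In each iteration every process: (1) sets input\_value to the output of the Median-based Byzantine Agreement algorithm run with input input\_value; (2) sets current\_state to the output of the Median-based Byzantine Agreement algorithm run with input current\_state; (3) sets its replica state (the current\_state used in the next iteration) to $\delta(\text{current\_state}, \text{input\_value})$. Recurrent transient faults occur only at the beginning of a pulse: they arbitrarily corrupt the local state (state value or input) of a non-Byzantine process, which then follows the protocol. Median-based Byzantine Agreement algorithm with parameter $0 \le \alpha < \lceil n/6\rceil - 1$, run by a process with value $v$: (a) send $v$ to all processes; set $A[i]$ to the value received from $p_i$ ($\bot$ if none). (b) For each $i$, in parallel, run a WeakMVBA instance with input $A[i]$ and replace $A[i]$ by its decision, where WeakMVBA is a Byzantine agreement protocol such that all non-faulty processes decide the same value, and if all non-faulty processes have the same input $u$ they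 decide $u$ (otherwise the decision may be any value or the default $\bot$). (c) Remove $\bot$ entries to get a list of length $k$; let $m$ be a most frequent value (deterministic tie-breaking) with count $C[m]$; if $C[m]\ge \lfloor k/3\rfloor+1+\alpha$ output $m$, else output the median of the sorted list (the entry at position $\lfloor k/2\rfloor$; lower middle value for even $k$). *)

theory Defs
  imports Complex_Main
begin

(* Processes are 0..<n.  The value \<bottom> is modelled by None. *)

definition most_frequent :: "'v::linorder list \<Rightarrow> 'v" where
  "most_frequent xs =
     Min {x \<in> set xs. \<forall>y \<in> set xs. count_list xs y \<le> count_list xs x}"

(* step (c) of the Median-based Byzantine Agreement algorithm, applied to the
   array A (after the WeakMVBA instances of step (b)) *)
definition mbba_decide :: "nat \<Rightarrow> 'v::linorder option list \<Rightarrow> 'v" where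
  "mbba_decide \<alpha> A =
     (let xs = map the (filter (\<lambda>a. a \<noteq> None) A);
          k = length xs;
          m = most_frequent xs
      in if count_list xs m \<ge> k div 3 + 1 + \<alpha> then m
         else sort xs ! ((k - 1) div 2))"

definition weak_mvba :: "nat \<Rightarrow> nat set \<Rightarrow> (nat \<Rightarrow> 'v option) \<Rightarrow> (nat \<Rightarrow> 'v option) \<Rightarrow> bool" where
  "weak_mvba n Byz inp dec \<longleftrightarrow>
     (\<forall>p < n. \<forall>q < n. p \<notin> Byz \<longrightarrow> q \<notin> Byz \<longrightarrow> dec p = dec q) \<and>
     (\<forall>u. (\<forall>p < n. p \<notin> Byz \<longrightarrow> inp p = u) \<longrightarrow> (\<forall>p < n. p \<notin> Byz \<longrightarrow> dec p = u))"

(* A synchronous run of the Median-based Byzantine Agreement algorithm with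
   parameter \<alpha> among processes 0..<n, Byzantine set Byz, where each
   non-Byzantine process p starts with value v p and outputs out p.
   R p i : value received by p from p_i in step (a) (None = nothing received);
   D p i : decision of p in the i-th WeakMVBA instance of step (b). *)
definition mbba_run :: "nat \<Rightarrow> nat set \<Rightarrow> nat \<Rightarrow> (nat \<Rightarrow> 'v::linorder) \<Rightarrow> (nat \<Rightarrow> 'v) \<Rightarrow> bool" where
  "mbba_run n Byz \<alpha> v out \<longleftrightarrow>
     (\<exists>R D :: nat \<Rightarrow> nat \<Rightarrow> 'v option.
        (\<forall>p < n. \<forall>i < n. p \<notin> Byz \<longrightarrow> i \<notin> Byz \<longrightarrow> R p i = Some (v i)) \<and>
        (\<forall>i < n. weak_mvba n Byz (\<lambda>p. R p i) (\<lambda>p. D p i)) \<and>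
        (\<forall>p < n. p \<notin> Byz \<longrightarrow> out p = mbba_decide \<alpha> (map (D p) [0..<n])))"

end

theory Submission
  imports Defs
begin

text \<open>Only the agreement property of WeakMVBA is needed: it makes every non-Byzantine
  process end step (b) with the same array, and step (c) is a deterministic function of
  that array.\<close>

lemma weak_mvba_agreement:
  assumes "weak_mvba n Byz inp dec" "p < n" "p \<notin> Byz" "q < n" "q \<notin> Byz"
  shows "dec p = dec q"
  using assms unfolding weak_mvba_def by blast

lemma mbba_run_agreement:
  assumes run: "mbba_run n Byz \<alpha> v out"
    and p: "p < n" "p \<notin> Byz" and q: "q < n" "q \<notin> Byz"
  shows "out p = out q"
proof -
  obtain R D :: "nat \<Rightarrow> nat \<Rightarrow> _ option" where
    mvba: "\<And>i. i < n \<Longrightarrow> weak_mvba n Byz (\<lambda>p. R p i) (\<lambda>p. D p i)" and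
    out: "\<And>p. p < n \<Longrightarrow> p \<notin> Byz \<Longrightarrow> out p = mbba_decide \<alpha> (map (D p) [0..<n])"
    using run unfolding mbba_run_def by blast
  have "D p i = D q i" if "i < n" for i
    using weak_mvba_agreement[OF mvba[OF that] p q] .
  then have "map (D p) [0..<n] = map (D q) [0..<n]"
    by simp
  then show ?thesis
    using out[OF p] out[OF q] by (simp only:)
qed

theorem lemma4:
  fixes n :: nat and \<alpha> :: nat
    and \<delta> :: "'q::linorder \<Rightarrow> 's::linorder \<Rightarrow> 'q"
    and Byz Cor :: "nat set"
    and pre_inp :: "nat \<Rightarrow> 's" and pre_st :: "nat \<Rightarrow> 'q"
    and inp0 inp1 :: "nat \<Rightarrow> 's" and st0 st1 st2 :: "nat \<Rightarrow> 'q"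
  assumes byz: "Byz \<subseteq> {0..<n}" "card Byz < n div 3"
    and cor: "Cor \<subseteq> {0..<n} - Byz" "int (card Cor) < \<lceil>real n / 6\<rceil> - 1"
    and alpha: "int \<alpha> < \<lceil>real n / 6\<rceil> - 1"
    and uncorrupted: "\<And>p. p < n \<Longrightarrow> p \<notin> Byz \<Longrightarrow> p \<notin> Cor \<Longrightarrow>
                        inp0 p = pre_inp p \<and> st0 p = pre_st p"
    and ba_input: "mbba_run n Byz \<alpha> inp0 inp1"
    and ba_state: "mbba_run n Byz \<alpha> st0 st1"
    and step: "\<And>p. p < n \<Longrightarrow> p \<notin> Byz \<Longrightarrow> st2 p = \<delta> (st1 p) (inp1 p)"
  shows "\<forall>p < n. \<forall>q < n. p \<notin> Byz \<longrightarrow> q \<notin> Byz \<longrightarrow> st2 p = st2 q"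
proof (intro allI impI)
  fix p q assume p: "p < n" "p \<notin> Byz" and q: "q < n" "q \<notin> Byz"
  have "st1 p = st1 q"
    using mbba_run_agreement[OF ba_state p q] .
  moreover have "inp1 p = inp1 q"
    using mbba_run_agreement[OF ba_input p q] .
  ultimately show "st2 p = st2 q"
    using step p q by simp
qed

end
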